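(* In the setting of the context (with $g$ unimodal, symmetric about $0$ and logconcave), the frequentist coverage $C(\theta)$ is nonincreasing (decreasing) in $\theta$ on the interval $(d_1,2d_0)$.
   Context: Let $g$ be a probability density on $\mathbb{R}$, unimodal and symmetric about $0$ (i.e. $g(z)=g(-z)$ and $g$ nonincreasing on $[0,\infty)$), and logconcave ($\log g$ concave on its support), with cdf $G$ and quantile function $G^{-1}(t)=\inf\{x:G(x)\ge t\}$. Let $X$ have density $g(x-\theta)$, $\theta\ge0$, and $P_\theta$ the corresponding probability. Fix $\alpha\in(0,1)$, and set $d_0=G^{-1}(\tfrac1{1+\alpha})$, $d_1=G^{-1}(1-\tfrac\alpha2)$. The HPD credible interval (prior $1_{[0,\infty)}(\theta)$, credibility $1-\alpha$) is $[l(X),u(X)]$ with $l(x)=\{x-G^{-1}(\tfrac12+\tfrac{1-\alpha}2G(x))\}1_{(d_0,\infty)}(x)$, $u(x)=x-G^{-1}(\alpha G(x))$ for $x\le d_0$ and $u(x)=x+G^{-1}(\tfrac12+\tfrac{1-\alpha}2G(x))$ for $x>d_0$. The frequentist coverage is $C(\theta)=P_\theta(l(X)\le\theta\le u(X))$. *)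

theory Defs
  imports "HOL-Analysis.Analysis"
begin

definition is_density :: "(real \<Rightarrow> real) \<Rightarrow> bool" where
  "is_density g \<longleftrightarrow> (\<forall>x. 0 \<le> g x) \<and> (g has_integral 1) UNIV"

definition symmetric_unimodal :: "(real \<Rightarrow> real) \<Rightarrow> bool" where
  "symmetric_unimodal g \<longleftrightarrow> (\<forall>z. g z = g (- z)) \<and> (\<forall>x y. 0 \<le> x \<longrightarrow> x \<le> y \<longrightarrow> g y \<le> g x)"

definition logconcave :: "(real \<Rightarrow> real) \<Rightarrow> bool" where
  "logconcave g \<longleftrightarrow> concave_on {x. 0 < g x} (\<lambda>x. ln (g x))"

definition cdf_of :: "(real \<Rightarrow> real) \<Rightarrow> real \<Rightarrow> real" where
  "cdf_of g x = integral {..x} g"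

definition quantile_of :: "(real \<Rightarrow> real) \<Rightarrow> real \<Rightarrow> real" where
  "quantile_of g t = Inf {x. cdf_of g x \<ge> t}"

definition hpd_d0 :: "(real \<Rightarrow> real) \<Rightarrow> real \<Rightarrow> real" where
  "hpd_d0 g \<alpha> = quantile_of g (1 / (1 + \<alpha>))"

definition hpd_d1 :: "(real \<Rightarrow> real) \<Rightarrow> real \<Rightarrow> real" where
  "hpd_d1 g \<alpha> = quantile_of g (1 - \<alpha> / 2)"

definition hpd_l :: "(real \<Rightarrow> real) \<Rightarrow> real \<Rightarrow> real \<Rightarrow> real" where
  "hpd_l g \<alpha> x =
     (if x > hpd_d0 g \<alpha>
      then x - quantile_of g (1/2 + (1 - \<alpha>) / 2 * cdf_of g x)
      else 0)"

definition hpd_u :: "(real \<Rightarrow> real) \<Rightarrow> real \<Rightarrow> real \<Rightarrow> real" where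
  "hpd_u g \<alpha> x =
     (if x \<le> hpd_d0 g \<alpha>
      then x - quantile_of g (\<alpha> * cdf_of g x)
      else x + quantile_of g (1/2 + (1 - \<alpha>) / 2 * cdf_of g x))"

text \<open>Frequentist coverage C(theta) = P_theta(l(X) <= theta <= u(X)), X with density g(x - theta).\<close>
definition coverage :: "(real \<Rightarrow> real) \<Rightarrow> real \<Rightarrow> real \<Rightarrow> real" where
  "coverage g \<alpha> \<theta> =
     integral {x. hpd_l g \<alpha> x \<le> \<theta> \<and> \<theta> \<le> hpd_u g \<alpha> x} (\<lambda>x. g (x - \<theta>))"

end

theory Submission
  imports Defs
begin

text \<open>
  Write \<open>G\<close> for the cdf and \<open>Q\<close> for the quantile function of the symmetric unimodal density \<open>g\<close>.
  For \<open>d\<^sub>1 < \<theta> < 2 d\<^sub>0\<close> the set of observations whose HPD interval covers \<open>\<theta>\<close> is (up to the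
  two endpoints) an interval \<open>[lo \<theta>, hi \<theta>]\<close>, where \<open>lo \<theta> \<in> [0, d\<^sub>0)\<close> is the last zero of
  \<open>x \<mapsto> G (x - \<theta>) - \<alpha> G x\<close> and \<open>hi \<theta> > d\<^sub>0\<close> the first zero of
  \<open>x \<mapsto> G (x - \<theta>) - 1/2 - (1 - \<alpha>)/2 G x\<close>; hence \<open>C \<theta> = G (hi \<theta> - \<theta>) - G (lo \<theta> - \<theta>)\<close>.
  Log-concavity makes \<open>g (x - \<theta>) / g x\<close> and \<open>G (x - \<theta>) / G x\<close> nondecreasing in \<open>x\<close>; this
  pins down the sign pattern of the first function and gives the bound
  \<open>(1 - \<alpha>) g (d\<^sub>0 + \<theta>) \<le> \<alpha> (1 + \<alpha>) g d\<^sub>0\<close>.  Comparing \<open>\<theta>\<^sub>1 < \<theta>\<^sub>2\<close> with \<open>\<delta> = \<theta>\<^sub>2 - \<theta>\<^sub>1\<close>, the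
  lower endpoint moves right by at least \<open>\<delta>\<close>, so the lower tail mass \<open>G (lo \<theta> - \<theta>)\<close> grows by at
  least \<open>\<alpha> \<delta> g d\<^sub>0\<close>, while that bound shows that the upper mass \<open>G (hi \<theta> - \<theta>)\<close> grows by at
  most \<open>\<alpha> \<delta> g d\<^sub>0\<close>.
\<close>

locale symmetric_density =
  fixes g :: "real \<Rightarrow> real"
  assumes density: "is_density g" and sym_unimodal: "symmetric_unimodal g"
begin

abbreviation G :: "real \<Rightarrow> real" where "G \<equiv> cdf_of g"
abbreviation Q :: "real \<Rightarrow> real" where "Q \<equiv> quantile_of g"

lemma g_nonneg: "0 \<le> g x"
  using density by (simp add: is_density_def)

lemma g_has_integral_1: "(g has_integral 1) UNIV"
  using density by (simp add: is_density_def)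

lemma g_even: "g (- x) = g x"
  using sym_unimodal by (metis symmetric_unimodal_def)

lemma g_antimono_abs: "\<bar>x\<bar> \<le> \<bar>y\<bar> \<Longrightarrow> g y \<le> g x"
  using sym_unimodal unfolding symmetric_unimodal_def
  by (metis abs_ge_zero abs_of_nonneg abs_of_nonpos g_even linorder_le_cases)

lemma g_le_g0: "g x \<le> g 0"
  using g_antimono_abs[of 0 x] by simp

lemma g_quasiconcave: "p \<le> w \<Longrightarrow> w \<le> q \<Longrightarrow> min (g p) (g q) \<le> g w"
  using g_antimono_abs[of w p] g_antimono_abs[of w q] by (cases "0 \<le> w") auto

lemma g_integrable_on: "S \<in> sets lebesgue \<Longrightarrow> g integrable_on S"
  using g_has_integral_1 g_nonneg nonnegative_absolutely_integrable_1 set_integrable_subset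
        absolutely_integrable_on_def by (metis integrable_on_def sets_UNIV subset_UNIV)

lemma G_increment: "x \<le> y \<Longrightarrow> G y - G x = integral {x..y} g"
proof -
  assume "x \<le> y"
  then have "(g has_integral (integral {..x} g + integral {x..y} g)) ({..x} \<union> {x..y})"
    using g_integrable_on[of "{..x}"] g_integrable_on[of "{x..y}"]
    by (intro has_integral_Un) (auto simp: integrable_integral min_def)
  moreover have "{..x} \<union> {x..y} = {..y}" using \<open>x \<le> y\<close> by auto
  ultimately show ?thesis by (simp add: cdf_of_def integral_unique)
qed

lemma G_increment_lower:
  assumes "x \<le> y" "\<And>z. x \<le> z \<Longrightarrow> z \<le> y \<Longrightarrow> m \<le> g z"
  shows "(y - x) * m \<le> G y - G x"
proof -
  have "integral {x..y} (\<lambda>_. m) \<le> integral {x..y} g"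
    by (rule integral_le) (use assms g_integrable_on in auto)
  then show ?thesis using G_increment[OF assms(1)] assms(1) by simp
qed

lemma G_increment_upper:
  assumes "x \<le> y" "\<And>z. x \<le> z \<Longrightarrow> z \<le> y \<Longrightarrow> g z \<le> m"
  shows "G y - G x \<le> (y - x) * m"
proof -
  have "integral {x..y} g \<le> integral {x..y} (\<lambda>_. m)"
    by (rule integral_le) (use assms g_integrable_on in auto)
  then show ?thesis using G_increment[OF assms(1)] assms(1) by simp
qed

lemma G_mono: "x \<le> y \<Longrightarrow> G x \<le> G y"
  using G_increment_lower[of x y 0] g_nonneg by simp

lemma G_nonneg: "0 \<le> G x"
  unfolding cdf_of_def by (rule integral_nonneg) (use g_integrable_on g_nonneg in auto)

lemma G_le_1: "G x \<le> 1"
proof -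
  have "integral {..x} g \<le> integral UNIV g"
    by (rule integral_subset_le) (use g_integrable_on g_nonneg g_has_integral_1 in auto)
  then show ?thesis using g_has_integral_1 by (simp add: cdf_of_def integral_unique)
qed

lemma G_continuous: "continuous_on UNIV G"
proof -
  have "\<bar>G y - G x\<bar> \<le> g 0 * \<bar>y - x\<bar>" for x y
    using G_increment_upper[of x y "g 0"] G_increment_upper[of y x "g 0"] G_mono[of x y] G_mono[of y x]
      g_le_g0 by (cases "x \<le> y") (auto simp: mult.commute)
  then have "(g 0)-lipschitz_on UNIV G"
    by (intro lipschitz_onI) (use g_nonneg in \<open>auto simp: dist_real_def\<close>)
  then show ?thesis using lipschitz_on_continuous_on by blast
qed

lemma G_tails:
  assumes "0 < e" shows "\<exists>B. \<forall>z\<ge>B. 1 - e < G z \<and> G (- z) < e"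
proof -
  obtain B where "0 < B"
    and B: "\<And>a b. ball 0 B \<subseteq> cbox a b \<Longrightarrow> norm (integral (cbox a b) g - 1) < e"
    using g_has_integral_1[unfolded has_integral_alt'] assms by auto
  have "1 - e < G z \<and> G (- z) < e" if "B \<le> z" for z
  proof -
    have "ball 0 B \<subseteq> cbox (- z) z" using that by (auto simp: dist_real_def)
    then have "\<bar>integral {- z..z} g - 1\<bar> < e" using B by fastforce
    moreover have "G z - G (- z) = integral {- z..z} g" using G_increment[of "- z" z] that \<open>0 < B\<close> by simp
    ultimately show ?thesis using G_nonneg[of "- z"] G_le_1[of z] by auto
  qed
  then show ?thesis by blast
qed

lemma G_at_top: "(G \<longlongrightarrow> 1) at_top"
proof (rule tendstoI)
  fix e :: real assume "0 < e"
  then obtain B where "\<forall>z\<ge>B. 1 - e < G z \<and> G (- z) < e" using G_tails by blast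
  then show "\<forall>\<^sub>F z in at_top. dist (G z) 1 < e"
    unfolding eventually_at_top_linorder using G_le_1 by (force simp: dist_real_def)
qed

lemma G_at_bot: "(G \<longlongrightarrow> 0) at_bot"
proof (rule tendstoI)
  fix e :: real assume "0 < e"
  then obtain B where B: "\<forall>z\<ge>B. 1 - e < G z \<and> G (- z) < e" using G_tails by blast
  have "dist (G z) 0 < e" if "z \<le> - B" for z
    using B[rule_format, of "- z"] that G_nonneg[of z] by (simp add: dist_real_def)
  then show "\<forall>\<^sub>F z in at_bot. dist (G z) 0 < e"
    unfolding eventually_at_bot_linorder by blast
qed

lemma G_left_tail: "((\<lambda>B. G (a - B)) \<longlongrightarrow> 0) at_top"
proof -
  have "filterlim (\<lambda>B::real. a + - B) at_bot at_top"
    by (rule filterlim_tendsto_add_at_bot_iff[OF tendsto_const, THEN iffD2])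
       (rule filterlim_uminus_at_bot_at_top)
  then show ?thesis using filterlim_compose[OF G_at_bot] by simp
qed

text \<open>Symmetry of \<open>g\<close> gives \<open>G (- x) = 1 - G x\<close>: both sides differ from
  \<open>G B + G (- B) \<longrightarrow> 1\<close> by the same reflected integral.\<close>
lemma G_symmetric: "G (- x) = 1 - G x"
proof -
  have "G (- x) + G x = G B + G (0 - B)" if "\<bar>x\<bar> \<le> B" for B
  proof -
    have "integral {- B..- x} g = integral {x..B} g"
      using Henstock_Kurzweil_Integration.integral_reflect_real[of B x g] g_even by simp
    moreover have "x \<le> B" using that by simp
    ultimately show ?thesis using G_increment[of "- B" "- x"] G_increment[of x B] by simp
  qed
  then have ev: "\<forall>\<^sub>F B in at_top. G B + G (0 - B) = G (- x) + G x"
    unfolding eventually_at_top_linorder by (metis order_refl)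
  have "((\<lambda>B. G B + G (0 - B)) \<longlongrightarrow> 1 + 0) at_top"
    by (intro tendsto_add G_at_top G_left_tail)
  then have "((\<lambda>_::real. G (- x) + G x) \<longlongrightarrow> 1) at_top"
    using tendsto_cong[OF ev] by simp
  then show ?thesis by (simp add: tendsto_const_iff)
qed

lemma G_zero_half: "G 0 = 1/2"
  using G_symmetric[of 0] by simp

lemma G_vanishes_below:
  assumes "\<And>z. z \<le> x \<Longrightarrow> g z = 0" shows "G x = 0"
  using integral_cong[of "{..x}" g "\<lambda>_. 0"] assms by (simp add: cdf_of_def)

lemma G_plateau:
  assumes "x < y" "G x = G y" shows "G x = 0 \<or> G y = 1"
proof -
  define m where "m = (x + y) / 2"
  have "x < m" "m < y" using assms by (auto simp: m_def)
  have Gm: "G m = G x" using G_mono[of x m] G_mono[of m y] assms \<open>x < m\<close> \<open>m < y\<close> by simp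
  show ?thesis
  proof (cases "0 \<le> m")
    case True
    have "(y - m) * g y \<le> 0"
      using G_increment_lower[of m y "g y"] \<open>m < y\<close> True Gm assms(2) g_antimono_abs by simp
    then have "g y = 0" using \<open>m < y\<close> g_nonneg[of y] by (simp add: mult_le_0_iff)
    have "g z = 0" if "z \<le> - y" for z
      using g_antimono_abs[of y z] g_nonneg[of z] \<open>g y = 0\<close> that True \<open>m < y\<close> by simp
    then have "G (- y) = 0" by (rule G_vanishes_below)
    then show ?thesis using G_symmetric[of y] by simp
  next
    case False
    have "(m - x) * g x \<le> 0"
      using G_increment_lower[of x m "g x"] \<open>x < m\<close> False Gm g_antimono_abs by simp
    then have "g x = 0" using \<open>x < m\<close> g_nonneg[of x] by (simp add: mult_le_0_iff)
    have "g z = 0" if "z \<le> x" for z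
      using g_antimono_abs[of x z] g_nonneg[of z] \<open>g x = 0\<close> that False \<open>x < m\<close> by simp
    then show ?thesis using G_vanishes_below by blast
  qed
qed

lemma G_strict_mono: "x < y \<Longrightarrow> 0 < G y \<Longrightarrow> G x < 1 \<Longrightarrow> G x < G y"
  using G_plateau[of x y] G_mono[of x y] by force

lemma g_vanishes_left_of_null:
  assumes "G x = 0" "y < x" shows "g y = 0"
proof -
  have "x < 0" using G_mono[of 0 x] assms(1) G_zero_half by force
  then have "(x - y) * g y \<le> G x - G y"
    using assms(2) by (intro G_increment_lower g_antimono_abs) auto
  then have "(x - y) * g y \<le> 0" using assms(1) G_nonneg[of y] by simp
  then show ?thesis using assms(2) g_nonneg[of y] by (simp add: mult_le_0_iff)
qed

lemma quantile_set:
  assumes "0 < p" "p < 1"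
  shows "{x. p \<le> G x} \<noteq> {}" "bdd_below {x. p \<le> G x}" "closed {x. p \<le> G x}"
proof -
  obtain N where "\<forall>z\<ge>N. p < G z"
    using order_tendstoD(1)[OF G_at_top assms(2)] by (auto simp: eventually_at_top_linorder)
  then have "N \<in> {x. p \<le> G x}" by (simp add: less_imp_le)
  then show "{x. p \<le> G x} \<noteq> {}" by blast
  obtain M where M: "\<forall>z\<le>M. G z < p"
    using order_tendstoD(2)[OF G_at_bot assms(1)] by (auto simp: eventually_at_bot_linorder)
  then have "M \<le> x" if "p \<le> G x" for x using that by (metis less_imp_le not_le not_less)
  then show "bdd_below {x. p \<le> G x}" by (intro bdd_belowI[of _ M]) simp
  show "closed {x. p \<le> G x}" by (rule closed_Collect_le[OF continuous_on_const G_continuous])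
qed

lemma G_quantile:
  assumes "0 < p" "p < 1" shows "G (Q p) = p"
proof -
  have mem: "p \<le> G (Q p)"
    using closed_contains_Inf[OF quantile_set[OF assms]] by (simp add: quantile_of_def)
  obtain M where M: "\<forall>z\<le>M. G z < p"
    using order_tendstoD(2)[OF G_at_bot assms(1)] by (auto simp: eventually_at_bot_linorder)
  then have "M \<le> Q p" using mem by (metis linorder_le_cases not_le)
  then obtain y where y: "y \<le> Q p" "G y = p"
    using IVT'[of G M p "Q p"] M mem continuous_on_subset[OF G_continuous] by force
  then have "Q p \<le> y"
    unfolding quantile_of_def using quantile_set[OF assms] by (intro cInf_lower) auto
  then show ?thesis using y by simp
qed

lemma quantile_le_iff: "0 < p \<Longrightarrow> p < 1 \<Longrightarrow> Q p \<le> y \<longleftrightarrow> p \<le> G y"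
  using G_mono[of "Q p" y] G_quantile[of p] quantile_set[of p]
  unfolding quantile_of_def by (auto intro: cInf_lower)

lemma le_quantile_iff:
  assumes "0 < p" "p < 1" shows "y \<le> Q p \<longleftrightarrow> G y \<le> p"
proof
  assume "G y \<le> p"
  show "y \<le> Q p"
  proof (rule ccontr)
    assume "\<not> y \<le> Q p"
    then have "G (Q p) = G y" using G_mono[of "Q p" y] \<open>G y \<le> p\<close> G_quantile[OF assms] by simp
    then show False using G_plateau[of "Q p" y] \<open>\<not> y \<le> Q p\<close> G_quantile[OF assms] assms by simp
  qed
qed (use G_mono G_quantile[OF assms] in force)

lemma shifted_g_has_integral:
  "x \<le> y \<Longrightarrow> ((\<lambda>z. g (z + c)) has_integral (G (y + c) - G (x + c))) {x..y}"
  using has_integral_affinity'[of g "G (y + c) - G (x + c)" "x + c" "y + c" 1 c]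
    G_increment[of "x + c" "y + c"] g_integrable_on[of "{x + c..y + c}"]
  by (simp add: integrable_integral)

lemma shifted_increments_le:
  assumes "x \<le> y" "\<And>z. x \<le> z \<Longrightarrow> z \<le> y \<Longrightarrow> a * g (z + c) \<le> b * g (z + d)"
  shows "a * (G (y + c) - G (x + c)) \<le> b * (G (y + d) - G (x + d))"
  using has_integral_le[OF has_integral_mult_right[OF shifted_g_has_integral[OF assms(1), of c], of a]
                           has_integral_mult_right[OF shifted_g_has_integral[OF assms(1), of d], of b]]
        assms(2) by auto

end

locale logconcave_density = symmetric_density +
  assumes logconcave: "logconcave g"
begin

text \<open>Monotone likelihood ratio of the location family: \<open>g (x - \<theta>) / g x\<close> is nondecreasing
  in \<open>x\<close> for \<open>\<theta> \<ge> 0\<close>.  Both sides involve four points that are two convex combinations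
  of \<open>u - \<theta>\<close> and \<open>v\<close>, so concavity of \<open>ln g\<close> applies.\<close>
lemma g_shift_ratio:
  assumes "0 \<le> \<theta>" "u \<le> v" shows "g (u - \<theta>) * g v \<le> g u * g (v - \<theta>)"
proof (cases "0 < g (u - \<theta>) \<and> 0 < g v \<and> 0 < \<theta>")
  case False
  then show ?thesis using assms g_nonneg[of "u - \<theta>"] g_nonneg[of v] g_nonneg[of u] g_nonneg[of "v - \<theta>"]
    by (auto simp: order_le_less)
next
  case True
  define p q where "p = u - \<theta>" and "q = v"
  have gp: "0 < g p" "0 < g q" and "0 < \<theta>" using True by (auto simp: p_def q_def)
  define t where "t = \<theta> / (q - p)"
  have "0 < q - p" using \<open>0 < \<theta>\<close> assms by (simp add: p_def q_def)
  then have t: "0 \<le> t" "t \<le> 1" "t * (q - p) = \<theta>"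
    using \<open>0 < \<theta>\<close> assms by (auto simp: t_def p_def q_def divide_le_eq)
  have u_eq: "u = (1 - t) *\<^sub>R p + t *\<^sub>R q" and v_eq: "v - \<theta> = (1 - (1 - t)) *\<^sub>R p + (1 - t) *\<^sub>R q"
    using t(3) by (auto simp: p_def q_def algebra_simps)
  have supp: "p \<in> {x. 0 < g x}" "q \<in> {x. 0 < g x}" using gp by auto
  have cc: "concave_on {x. 0 < g x} (\<lambda>x. ln (g x))" using logconcave by (simp add: logconcave_def)
  have gu: "0 < g u" and gv: "0 < g (v - \<theta>)"
    using g_quasiconcave[of p u q] g_quasiconcave[of p "v - \<theta>" q] gp assms \<open>0 < \<theta>\<close>
    by (auto simp: p_def q_def)
  have "(1 - t) * ln (g p) + t * ln (g q) \<le> ln (g u)"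
    using concave_onD[OF cc t(1,2) supp] u_eq by simp
  moreover have "t * ln (g p) + (1 - t) * ln (g q) \<le> ln (g (v - \<theta>))"
    using concave_onD[OF cc _ _ supp, of "1 - t"] t v_eq by simp
  ultimately have "ln (g p * g q) \<le> ln (g u * g (v - \<theta>))"
    using gp gu gv by (simp add: ln_mult algebra_simps)
  then show ?thesis using gp gu gv by (simp add: p_def q_def)
qed

text \<open>Integrating the likelihood ratio inequality over \<open>(-\<infinity>, x]\<close>.\<close>
lemma G_g_shift_ratio:
  assumes "0 \<le> \<theta>" "x \<le> v" shows "g v * G (x - \<theta>) \<le> g (v - \<theta>) * G x"
proof -
  have "g v * (G (x - \<theta>) - G ((x - \<theta>) - B)) \<le> g (v - \<theta>) * (G x - G (x - B))" if "0 \<le> B" for B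
    using shifted_increments_le[of "x - B" x "g v" "- \<theta>" "g (v - \<theta>)" 0] that
      g_shift_ratio[OF assms(1)] assms(2) by (auto simp: mult.commute algebra_simps)
  then have "\<forall>\<^sub>F B in at_top. g v * (G (x - \<theta>) - G ((x - \<theta>) - B)) \<le> g (v - \<theta>) * (G x - G (x - B))"
    by (auto simp: eventually_at_top_linorder)
  moreover have "((\<lambda>B. g v * (G (x - \<theta>) - G ((x - \<theta>) - B))) \<longlongrightarrow> g v * (G (x - \<theta>) - 0)) at_top"
    and "((\<lambda>B. g (v - \<theta>) * (G x - G (x - B))) \<longlongrightarrow> g (v - \<theta>) * (G x - 0)) at_top"
    by (intro tendsto_intros G_left_tail)+
  ultimately show ?thesis by (simp add: tendsto_le[OF trivial_limit_at_top_linorder])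
qed

lemma G_shift_ratio:
  assumes "0 \<le> \<theta>" "x \<le> y" shows "G (x - \<theta>) * G y \<le> G x * G (y - \<theta>)"
proof -
  have "G (x - \<theta>) * (G (y + 0) - G (x + 0)) \<le> G x * (G (y + - \<theta>) - G (x + - \<theta>))"
    using assms G_g_shift_ratio[OF assms(1)] by (intro shifted_increments_le) (auto simp: mult.commute)
  then show ?thesis by (simp add: algebra_simps)
qed

end
locale hpd_setting = logconcave_density +
  fixes \<alpha> :: real
  assumes \<alpha>_pos: "0 < \<alpha>" and \<alpha>_lt_1: "\<alpha> < 1"
begin

abbreviation d0 :: real where "d0 \<equiv> hpd_d0 g \<alpha>"
abbreviation d1 :: real where "d1 \<equiv> hpd_d1 g \<alpha>"

text \<open>For \<open>x \<le> d\<^sub>0\<close> the upper bound \<open>u x\<close> reaches \<open>\<theta>\<close> iff \<open>lower_gap \<theta> x \<ge> 0\<close>; for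
  \<open>x > d\<^sub>0\<close> the lower bound \<open>l x\<close> stays below \<open>\<theta>\<close> iff \<open>upper_gap \<theta> x \<le> 1/2\<close>.  The endpoints
  of the covering set are the boundary points of these two conditions.\<close>
definition lower_gap :: "real \<Rightarrow> real \<Rightarrow> real" where
  "lower_gap \<theta> x = G (x - \<theta>) - \<alpha> * G x"
definition upper_gap :: "real \<Rightarrow> real \<Rightarrow> real" where
  "upper_gap \<theta> x = G (x - \<theta>) - (1 - \<alpha>) / 2 * G x"
definition lo :: "real \<Rightarrow> real" where
  "lo \<theta> = Sup {x. x \<le> d0 \<and> lower_gap \<theta> x < 0}"
definition hi :: "real \<Rightarrow> real" where
  "hi \<theta> = Inf {x. d0 \<le> x \<and> 1/2 < upper_gap \<theta> x}"

lemma G_d0: "G d0 = 1 / (1 + \<alpha>)"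
  unfolding hpd_d0_def using \<alpha>_pos \<alpha>_lt_1 by (intro G_quantile) (auto simp: field_simps)

lemma G_d1: "G d1 = 1 - \<alpha> / 2"
  unfolding hpd_d1_def using \<alpha>_pos \<alpha>_lt_1 by (intro G_quantile) auto

lemma G_neg_d0: "G (- d0) = \<alpha> / (1 + \<alpha>)"
  using G_symmetric[of d0] G_d0 \<alpha>_pos by (simp add: field_simps)

lemma G_neg_d1: "G (- d1) = \<alpha> / 2"
  using G_symmetric[of d1] G_d1 by simp

text \<open>\<open>d\<^sub>0\<close> is the point where the two branches of the HPD interval meet.\<close>
lemma d0_fixed_point: "1/2 + (1 - \<alpha>) / 2 * G d0 = G d0"
  using G_d0 \<alpha>_pos by (simp add: field_simps)

lemma d0_pos: "0 < d0"
proof -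
  have "1/2 < 1 / (1 + \<alpha>)" using \<alpha>_pos \<alpha>_lt_1 by (simp add: field_simps)
  then show ?thesis using G_zero_half G_d0 G_mono[of d0 0] by force
qed

lemma d0_le_d1: "d0 \<le> d1"
proof -
  have "1 / (1 + \<alpha>) \<le> 1 - \<alpha> / 2"
    using \<alpha>_pos \<alpha>_lt_1 mult_left_mono[of \<alpha> 1 \<alpha>] by (simp add: field_simps)
  then show ?thesis unfolding hpd_d1_def using G_d0 \<alpha>_pos \<alpha>_lt_1 by (subst le_quantile_iff) auto
qed

lemma lower_gap_continuous: "continuous_on UNIV (lower_gap \<theta>)"
  unfolding lower_gap_def[abs_def]
  by (intro continuous_intros continuous_on_compose2[OF G_continuous]) auto

lemma upper_gap_continuous: "continuous_on UNIV (upper_gap \<theta>)"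
  unfolding upper_gap_def[abs_def]
  by (intro continuous_intros continuous_on_compose2[OF G_continuous]) auto

context
  fixes \<theta> :: real
  assumes \<theta>_gt_d1: "d1 < \<theta>" and \<theta>_lt: "\<theta> < 2 * d0"
begin

lemma \<theta>_pos: "0 < \<theta>"
  using \<theta>_gt_d1 d0_pos d0_le_d1 by linarith

lemma lower_gap_at_0: "lower_gap \<theta> 0 < 0"
proof -
  have "G (- \<theta>) < G (- d1)"
    using \<theta>_gt_d1 G_neg_d1 \<alpha>_pos \<alpha>_lt_1 G_mono[of "- \<theta>" "- d1"] by (intro G_strict_mono) auto
  then have "G (0 - \<theta>) < \<alpha> * G 0" using G_neg_d1 unfolding G_zero_half by simp
  then show ?thesis by (simp add: lower_gap_def)
qed

lemma lower_gap_at_d0: "0 < lower_gap \<theta> d0"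
proof -
  have "0 < G (- d0)" "G (- d0) < 1" unfolding G_neg_d0 using \<alpha>_pos by auto
  then have "G (- d0) < G (d0 - \<theta>)"
    using \<theta>_lt G_mono[of "- d0" "d0 - \<theta>"] by (intro G_strict_mono) auto
  moreover have "\<alpha> * G d0 = G (- d0)" using G_d0 G_neg_d0 by simp
  ultimately show ?thesis unfolding lower_gap_def by linarith
qed

lemma lower_set:
  "0 \<in> {x. x \<le> d0 \<and> lower_gap \<theta> x < 0}" "bdd_above {x. x \<le> d0 \<and> lower_gap \<theta> x < 0}"
  using lower_gap_at_0 d0_pos by (auto intro: bdd_aboveI[of _ d0])

lemma lo_bounds: "0 \<le> lo \<theta>" "lo \<theta> \<le> d0"
  unfolding lo_def using lower_set by (auto intro: cSup_upper cSup_least)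

lemma lower_gap_right_of_lo: "x \<le> d0 \<Longrightarrow> lo \<theta> < x \<Longrightarrow> 0 \<le> lower_gap \<theta> x"
  using cSup_upper[OF _ lower_set(2), of x] unfolding lo_def by force

text \<open>Left of \<open>lo \<theta>\<close> the lower gap stays negative, because by log-concavity
  \<open>G (x - \<theta>) / G x\<close> is nondecreasing.\<close>
lemma lower_gap_left_of_lo:
  assumes "x < lo \<theta>" "0 < G x" shows "lower_gap \<theta> x < 0"
proof -
  obtain y where y: "y \<le> d0" "lower_gap \<theta> y < 0" "x < y"
    using assms(1) less_cSup_iff[OF _ lower_set(2)] lower_set(1) unfolding lo_def by force
  show ?thesis
  proof (rule ccontr)
    assume "\<not> lower_gap \<theta> x < 0"
    then have "\<alpha> * G x * G y \<le> G (x - \<theta>) * G y"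
      using G_nonneg[of y] by (simp add: lower_gap_def mult_right_mono)
    also have "\<dots> \<le> G x * G (y - \<theta>)" using G_shift_ratio[of \<theta> x y] \<theta>_pos y by simp
    also have "\<dots> < G x * (\<alpha> * G y)" using y(2) assms(2) by (simp add: lower_gap_def)
    finally show False by simp
  qed
qed

lemma lo_root: "lower_gap \<theta> (lo \<theta>) = 0" "lo \<theta> < d0"
proof -
  have "lo \<theta> \<in> closure {x. x \<le> d0 \<and> lower_gap \<theta> x < 0}"
    unfolding lo_def using lower_set by (intro closure_contains_Sup) auto
  also have "\<dots> \<subseteq> {x. lower_gap \<theta> x \<le> 0}"
    by (intro closure_minimal closed_Collect_le[OF lower_gap_continuous continuous_on_const]) auto
  finally have le: "lower_gap \<theta> (lo \<theta>) \<le> 0" by simp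
  then show lt: "lo \<theta> < d0" using lo_bounds lower_gap_at_d0 by (cases "lo \<theta> = d0") auto
  have "lo \<theta> \<in> closure {lo \<theta><..d0}" using lt by simp
  also have "\<dots> \<subseteq> {x. 0 \<le> lower_gap \<theta> x}"
    by (intro closure_minimal closed_Collect_le[OF continuous_on_const lower_gap_continuous])
       (auto intro: lower_gap_right_of_lo)
  finally show "lower_gap \<theta> (lo \<theta>) = 0" using le by simp
qed

text \<open>On \<open>[d\<^sub>0, \<infinity>)\<close>, which lies right of \<open>\<theta>/2\<close>, the shifted density dominates \<open>g\<close>,
  so the upper gap is nondecreasing there.\<close>
lemma upper_gap_mono:
  assumes "d0 \<le> x" "x \<le> y" shows "upper_gap \<theta> x \<le> upper_gap \<theta> y"
proof -
  have "1 * (G (y + 0) - G (x + 0)) \<le> 1 * (G (y + - \<theta>) - G (x + - \<theta>))"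
    using assms \<theta>_lt \<theta>_pos by (intro shifted_increments_le) (auto intro!: g_antimono_abs)
  then have "G y - G x \<le> G (y - \<theta>) - G (x - \<theta>)" by simp
  moreover have "(1 - \<alpha>) / 2 * (G y - G x) \<le> 1 * (G y - G x)"
    using G_mono[OF assms(2)] \<alpha>_pos \<alpha>_lt_1 by (intro mult_right_mono) auto
  then have "(1 - \<alpha>) / 2 * G y - (1 - \<alpha>) / 2 * G x \<le> G y - G x"
    by (simp only: right_diff_distrib mult_1)
  ultimately show ?thesis unfolding upper_gap_def by linarith
qed

lemma upper_gap_at_d0: "upper_gap \<theta> d0 < 1/2"
proof -
  have "G (d0 - \<theta>) < G 0"
    using \<theta>_gt_d1 d0_le_d1 G_zero_half G_mono[of "d0 - \<theta>" 0] by (intro G_strict_mono) auto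
  moreover have "0 \<le> (1 - \<alpha>) / 2 * G d0" using G_nonneg[of d0] \<alpha>_lt_1 by simp
  ultimately show ?thesis unfolding upper_gap_def G_zero_half by linarith
qed

lemma upper_set:
  "d1 + 1 + \<theta> \<in> {x. d0 \<le> x \<and> 1/2 < upper_gap \<theta> x}" "bdd_below {x. d0 \<le> x \<and> 1/2 < upper_gap \<theta> x}"
proof -
  have "G d1 < G (d1 + 1)"
    using G_d1 \<alpha>_pos \<alpha>_lt_1 G_mono[of d1 "d1 + 1"] by (intro G_strict_mono) auto
  moreover have "(1 - \<alpha>) / 2 * G (d1 + 1 + \<theta>) \<le> (1 - \<alpha>) / 2"
    using G_le_1 \<alpha>_lt_1 by (simp add: mult_left_le)
  ultimately show "d1 + 1 + \<theta> \<in> {x. d0 \<le> x \<and> 1/2 < upper_gap \<theta> x}"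
    using G_d1 d0_le_d1 \<theta>_pos by (auto simp: upper_gap_def field_simps)
qed (auto intro: bdd_belowI[of _ d0])

lemma hi_ge_d0: "d0 \<le> hi \<theta>"
  unfolding hi_def using upper_set by (intro cInf_greatest) auto

lemma upper_gap_left_of_hi:
  assumes "d0 \<le> x" "x < hi \<theta>" shows "upper_gap \<theta> x \<le> 1/2"
proof (rule ccontr)
  assume "\<not> upper_gap \<theta> x \<le> 1/2"
  then have "hi \<theta> \<le> x" unfolding hi_def using assms(1) by (intro cInf_lower[OF _ upper_set(2)]) auto
  then show False using assms(2) by simp
qed

lemma upper_gap_right_of_hi:
  assumes "hi \<theta> < x" shows "1/2 < upper_gap \<theta> x"
proof -
  obtain y where "d0 \<le> y" "1/2 < upper_gap \<theta> y" "y < x"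
    using assms cInf_less_iff[OF _ upper_set(2)] upper_set(1) unfolding hi_def by force
  then show ?thesis using upper_gap_mono[of y x] by linarith
qed

lemma hi_root: "upper_gap \<theta> (hi \<theta>) = 1/2" "d0 < hi \<theta>"
proof -
  have "hi \<theta> \<in> closure {x. d0 \<le> x \<and> 1/2 < upper_gap \<theta> x}"
    unfolding hi_def using upper_set by (intro closure_contains_Inf) auto
  also have "\<dots> \<subseteq> {x. 1/2 \<le> upper_gap \<theta> x}"
    by (intro closure_minimal closed_Collect_le[OF continuous_on_const upper_gap_continuous]) auto
  finally have ge: "1/2 \<le> upper_gap \<theta> (hi \<theta>)" by simp
  then show lt: "d0 < hi \<theta>" using hi_ge_d0 upper_gap_at_d0 by (cases "hi \<theta> = d0") auto
  have "hi \<theta> \<in> closure {d0..<hi \<theta>}" using lt by simp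
  also have "\<dots> \<subseteq> {x. upper_gap \<theta> x \<le> 1/2}"
    by (intro closure_minimal closed_Collect_le[OF upper_gap_continuous continuous_on_const])
       (metis atLeastLessThan_iff mem_Collect_eq subsetI upper_gap_left_of_hi)
  finally show "upper_gap \<theta> (hi \<theta>) = 1/2" using ge by simp
qed

lemma hi_minus_\<theta>_ge_d0: "d0 \<le> hi \<theta> - \<theta>"
proof (rule ccontr)
  assume "\<not> d0 \<le> hi \<theta> - \<theta>"
  have eq: "G (hi \<theta> - \<theta>) = 1/2 + (1 - \<alpha>) / 2 * G (hi \<theta>)"
    using hi_root by (simp add: upper_gap_def)
  have "(1 - \<alpha>) / 2 * G (hi \<theta>) \<le> (1 - \<alpha>) / 2" using G_le_1 \<alpha>_lt_1 by (simp add: mult_left_le)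
  then have "G (hi \<theta> - \<theta>) < G d0"
    using eq \<alpha>_pos G_d0 \<open>\<not> d0 \<le> hi \<theta> - \<theta>\<close> by (intro G_strict_mono) auto
  moreover have "(1 - \<alpha>) / 2 * G d0 \<le> (1 - \<alpha>) / 2 * G (hi \<theta>)"
    using G_mono hi_root(2) \<alpha>_lt_1 by (simp add: mult_left_mono)
  ultimately show False using eq d0_fixed_point by linarith
qed

lemma covers_left_iff:
  assumes "x \<le> d0" "x \<noteq> lo \<theta>" "0 < G x"
  shows "(hpd_l g \<alpha> x \<le> \<theta> \<and> \<theta> \<le> hpd_u g \<alpha> x) \<longleftrightarrow> lo \<theta> \<le> x"
proof -
  have "\<alpha> * G x \<le> \<alpha>" using mult_left_le[OF G_le_1[of x]] \<alpha>_pos by simp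
  moreover have "0 < \<alpha> * G x" using assms(3) \<alpha>_pos by simp
  ultimately have p: "0 < \<alpha> * G x" "\<alpha> * G x < 1" using \<alpha>_lt_1 by linarith+
  have "(hpd_l g \<alpha> x \<le> \<theta> \<and> \<theta> \<le> hpd_u g \<alpha> x) \<longleftrightarrow> 0 \<le> lower_gap \<theta> x"
    using assms(1) \<theta>_pos quantile_le_iff[OF p, of "x - \<theta>"]
    by (auto simp: hpd_l_def hpd_u_def lower_gap_def)
  also have "\<dots> \<longleftrightarrow> lo \<theta> \<le> x"
    using lower_gap_right_of_lo[OF assms(1)] lower_gap_left_of_lo[OF _ assms(3)] assms(2)
    by (cases "lo \<theta> < x") auto
  finally show ?thesis .
qed

text \<open>Right of \<open>d\<^sub>0\<close> the upper bound always exceeds \<open>\<theta> < 2 d\<^sub>0\<close>, and the lower bound stays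
  below \<open>\<theta>\<close> exactly when \<open>x\<close> lies left of \<open>hi \<theta>\<close>.\<close>
lemma covers_right_iff:
  assumes "d0 < x" "x \<noteq> hi \<theta>"
  shows "(hpd_l g \<alpha> x \<le> \<theta> \<and> \<theta> \<le> hpd_u g \<alpha> x) \<longleftrightarrow> x \<le> hi \<theta>"
proof -
  define p where "p = 1/2 + (1 - \<alpha>) / 2 * G x"
  have "(1 - \<alpha>) / 2 * G x \<le> (1 - \<alpha>) / 2" "0 \<le> (1 - \<alpha>) / 2 * G x"
    using G_le_1[of x] G_nonneg[of x] \<alpha>_lt_1 by (auto simp: mult_left_le)
  then have p: "0 < p" "p < 1" using \<alpha>_pos by (auto simp: p_def)
  have "(1 - \<alpha>) / 2 * G d0 \<le> (1 - \<alpha>) / 2 * G x"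
    using assms(1) \<alpha>_lt_1 by (intro mult_left_mono G_mono) auto
  then have "G (\<theta> - x) \<le> p"
    using d0_fixed_point G_mono[of "\<theta> - x" d0] assms(1) \<theta>_lt unfolding p_def by linarith
  then have "\<theta> \<le> hpd_u g \<alpha> x"
    using le_quantile_iff[OF p, of "\<theta> - x"] assms(1) by (simp add: hpd_u_def p_def)
  moreover have "hpd_l g \<alpha> x \<le> \<theta> \<longleftrightarrow> upper_gap \<theta> x \<le> 1/2"
    using le_quantile_iff[OF p, of "x - \<theta>"] assms(1) unfolding hpd_l_def upper_gap_def p_def by auto
  moreover have "upper_gap \<theta> x \<le> 1/2 \<longleftrightarrow> x \<le> hi \<theta>"
    using upper_gap_left_of_hi[of x] upper_gap_right_of_hi[of x] assms by (cases "x < hi \<theta>") auto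
  ultimately show ?thesis by blast
qed

lemma coverage_eq: "coverage g \<alpha> \<theta> = G (hi \<theta> - \<theta>) - G (lo \<theta> - \<theta>)"
proof -
  define A where "A = {x. hpd_l g \<alpha> x \<le> \<theta> \<and> \<theta> \<le> hpd_u g \<alpha> x}"
  have lo_hi: "lo \<theta> < d0" "d0 < hi \<theta>" using lo_root hi_root by auto
  have same: "(if x \<in> A then g (x - \<theta>) else 0) = (if x \<in> {lo \<theta>..hi \<theta>} then g (x - \<theta>) else 0)"
    if "x \<notin> {lo \<theta>, hi \<theta>}" for x
  proof (cases "G x = 0")
    case True
    then show ?thesis using g_vanishes_left_of_null[of x "x - \<theta>"] \<theta>_pos by simp
  next
    case False
    then have "0 < G x" using G_nonneg[of x] by simp
    then show ?thesis
      using covers_left_iff[of x] covers_right_iff[of x] that lo_hi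
      by (cases "x \<le> d0") (auto simp: A_def)
  qed
  have "coverage g \<alpha> \<theta> = integral A (\<lambda>x. g (x - \<theta>))" by (simp add: coverage_def A_def)
  also have "\<dots> = integral UNIV (\<lambda>x. if x \<in> A then g (x - \<theta>) else 0)"
    by (rule Henstock_Kurzweil_Integration.integral_restrict_UNIV[symmetric])
  also have "\<dots> = integral UNIV (\<lambda>x. if x \<in> {lo \<theta>..hi \<theta>} then g (x - \<theta>) else 0)"
    by (rule integral_spike[of "{lo \<theta>, hi \<theta>}"]) (use same in auto)
  also have "\<dots> = integral {lo \<theta>..hi \<theta>} (\<lambda>x. g (x - \<theta>))"
    by (rule Henstock_Kurzweil_Integration.integral_restrict_UNIV)
  also have "\<dots> = G (hi \<theta> - \<theta>) - G (lo \<theta> - \<theta>)"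
    using shifted_g_has_integral[of "lo \<theta>" "hi \<theta>" "- \<theta>"] lo_hi by (simp add: integral_unique)
  finally show ?thesis .
qed

end

text \<open>Raising \<open>\<theta>\<close> by \<open>\<delta>\<close> moves the lower endpoint right by at least \<open>\<delta>\<close>: every point of
  \<open>[lo \<theta>\<^sub>1, lo \<theta>\<^sub>1 + \<delta>)\<close> left of \<open>d\<^sub>0\<close> still has negative lower gap for \<open>\<theta>\<^sub>2\<close>.\<close>
lemma lo_shift:
  assumes "d1 < \<theta>\<^sub>1" "\<theta>\<^sub>1 < \<theta>\<^sub>2" "\<theta>\<^sub>2 < 2 * d0"
  shows "lo \<theta>\<^sub>1 + (\<theta>\<^sub>2 - \<theta>\<^sub>1) \<le> lo \<theta>\<^sub>2"
proof -
  have t1: "d1 < \<theta>\<^sub>1" "\<theta>\<^sub>1 < 2 * d0" and t2: "d1 < \<theta>\<^sub>2" "\<theta>\<^sub>2 < 2 * d0" using assms by auto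
  have root1: "G (lo \<theta>\<^sub>1 - \<theta>\<^sub>1) = \<alpha> * G (lo \<theta>\<^sub>1)" using lo_root(1)[OF t1] by (simp add: lower_gap_def)
  have "0 < G (lo \<theta>\<^sub>1)" using G_mono[of 0 "lo \<theta>\<^sub>1"] lo_bounds(1)[OF t1] G_zero_half by simp
  then have "0 < \<alpha> * G (lo \<theta>\<^sub>1)" using \<alpha>_pos by simp
  moreover have "\<alpha> * G (lo \<theta>\<^sub>1) \<le> \<alpha>" using mult_left_le[OF G_le_1] \<alpha>_pos by simp
  ultimately have root1_bounds: "0 < G (lo \<theta>\<^sub>1 - \<theta>\<^sub>1)" "G (lo \<theta>\<^sub>1 - \<theta>\<^sub>1) < 1"
    unfolding root1 using \<alpha>_lt_1 by linarith+
  have below: "x \<le> lo \<theta>\<^sub>2" if x: "lo \<theta>\<^sub>1 \<le> x" "x < lo \<theta>\<^sub>1 + (\<theta>\<^sub>2 - \<theta>\<^sub>1)" "x \<le> d0" for x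
  proof -
    have "G (x - \<theta>\<^sub>2) < G (lo \<theta>\<^sub>1 - \<theta>\<^sub>1)"
      using x root1_bounds G_mono[of "x - \<theta>\<^sub>2" "lo \<theta>\<^sub>1 - \<theta>\<^sub>1"] by (intro G_strict_mono) auto
    moreover have "\<alpha> * G (lo \<theta>\<^sub>1) \<le> \<alpha> * G x" using G_mono[OF x(1)] \<alpha>_pos by simp
    ultimately have "lower_gap \<theta>\<^sub>2 x < 0" using root1 by (simp add: lower_gap_def)
    then show ?thesis unfolding lo_def using x(3) lower_set(2)[OF t2] by (intro cSup_upper) auto
  qed
  show ?thesis
  proof (rule ccontr)
    assume short: "\<not> ?thesis"
    define x where "x = min ((lo \<theta>\<^sub>2 + (lo \<theta>\<^sub>1 + (\<theta>\<^sub>2 - \<theta>\<^sub>1))) / 2) ((lo \<theta>\<^sub>2 + d0) / 2)"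
    have "lo \<theta>\<^sub>1 \<le> lo \<theta>\<^sub>2" using below[of "lo \<theta>\<^sub>1"] lo_root(2)[OF t1] assms by simp
    then have "lo \<theta>\<^sub>2 < x" "lo \<theta>\<^sub>1 \<le> x" "x < lo \<theta>\<^sub>1 + (\<theta>\<^sub>2 - \<theta>\<^sub>1)" "x \<le> d0"
      using short lo_root(2)[OF t2] unfolding x_def min_def by auto
    then show False using below[of x] by simp
  qed
qed

text \<open>Hence the lower tail mass \<open>G (lo \<theta> - \<theta>) = \<alpha> G (lo \<theta>)\<close> grows at rate at least \<open>\<alpha> g d\<^sub>0\<close>.\<close>
lemma lower_mass_gain:
  assumes "d1 < \<theta>\<^sub>1" "\<theta>\<^sub>1 < \<theta>\<^sub>2" "\<theta>\<^sub>2 < 2 * d0"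
  shows "\<alpha> * ((\<theta>\<^sub>2 - \<theta>\<^sub>1) * g d0) \<le> G (lo \<theta>\<^sub>2 - \<theta>\<^sub>2) - G (lo \<theta>\<^sub>1 - \<theta>\<^sub>1)"
proof -
  have t1: "d1 < \<theta>\<^sub>1" "\<theta>\<^sub>1 < 2 * d0" and t2: "d1 < \<theta>\<^sub>2" "\<theta>\<^sub>2 < 2 * d0" using assms by auto
  have shift: "lo \<theta>\<^sub>1 + (\<theta>\<^sub>2 - \<theta>\<^sub>1) \<le> lo \<theta>\<^sub>2" by (rule lo_shift[OF assms])
  have "(lo \<theta>\<^sub>1 + (\<theta>\<^sub>2 - \<theta>\<^sub>1) - lo \<theta>\<^sub>1) * g d0 \<le> G (lo \<theta>\<^sub>1 + (\<theta>\<^sub>2 - \<theta>\<^sub>1)) - G (lo \<theta>\<^sub>1)"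
    using shift assms lo_bounds(1)[OF t1] lo_root(2)[OF t2]
    by (intro G_increment_lower g_antimono_abs) auto
  then have "(\<theta>\<^sub>2 - \<theta>\<^sub>1) * g d0 \<le> G (lo \<theta>\<^sub>1 + (\<theta>\<^sub>2 - \<theta>\<^sub>1)) - G (lo \<theta>\<^sub>1)" by simp
  also have "\<dots> \<le> G (lo \<theta>\<^sub>2) - G (lo \<theta>\<^sub>1)" using G_mono[OF shift] by simp
  finally have "\<alpha> * ((\<theta>\<^sub>2 - \<theta>\<^sub>1) * g d0) \<le> \<alpha> * G (lo \<theta>\<^sub>2) - \<alpha> * G (lo \<theta>\<^sub>1)"
    using \<alpha>_pos by (simp add: right_diff_distrib[symmetric])
  then show ?thesis using lo_root(1)[OF t1] lo_root(1)[OF t2] by (simp add: lower_gap_def)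
qed

text \<open>Log-concavity compares the density at \<open>d\<^sub>0 + \<theta>\<close> with that at \<open>d\<^sub>0\<close>: the mass
  \<open>G d\<^sub>0 - 1/2\<close> of \<open>[0, d\<^sub>0]\<close> weighted by \<open>g (d\<^sub>0 + \<theta>)\<close> is at most the mass of
  \<open>[\<theta>, d\<^sub>0 + \<theta>]\<close>, which is below \<open>\<alpha>/2\<close> since \<open>\<theta> > d\<^sub>1\<close>, weighted by \<open>g d\<^sub>0\<close>.\<close>
lemma tail_density_bound:
  assumes "d1 < \<theta>" shows "(1 - \<alpha>) * g (d0 + \<theta>) \<le> \<alpha> * (1 + \<alpha>) * g d0"
proof -
  have "0 \<le> \<theta>" using assms d0_pos d0_le_d1 by linarith
  have "g (d0 + \<theta>) * g (z + 0) \<le> g d0 * g (z + \<theta>)" if "z \<le> d0" for z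
    using g_shift_ratio[OF \<open>0 \<le> \<theta>\<close>, of "z + \<theta>" "d0 + \<theta>"] that by (simp add: mult.commute)
  then have "g (d0 + \<theta>) * (G (d0 + 0) - G (0 + 0)) \<le> g d0 * (G (d0 + \<theta>) - G (0 + \<theta>))"
    using d0_pos by (intro shifted_increments_le) auto
  moreover have "G (d0 + \<theta>) - G \<theta> \<le> \<alpha> / 2"
    using G_mono[of d1 \<theta>] assms G_d1 G_le_1[of "d0 + \<theta>"] by linarith
  then have "g d0 * (G (d0 + \<theta>) - G \<theta>) \<le> g d0 * (\<alpha> / 2)" using g_nonneg by (rule mult_left_mono)
  ultimately have key: "g (d0 + \<theta>) * (G d0 - G 0) \<le> g d0 * (\<alpha> / 2)" by simp
  have "(1 - \<alpha>) * g (d0 + \<theta>) = 2 * (1 + \<alpha>) * (g (d0 + \<theta>) * (G d0 - G 0))"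
    unfolding G_d0 G_zero_half using \<alpha>_pos by (simp add: field_simps)
  also have "\<dots> \<le> 2 * (1 + \<alpha>) * (g d0 * (\<alpha> / 2))"
    using key \<alpha>_pos by (intro mult_left_mono) auto
  also have "\<dots> = \<alpha> * (1 + \<alpha>) * g d0" by simp
  finally show ?thesis .
qed

text \<open>When the upper boundary seen from \<open>\<theta>\<close> moves right, \<open>G (hi \<theta>)\<close> grows by at most the
  growth of \<open>G (hi \<theta> - \<theta>)\<close> plus \<open>\<delta> g (hi \<theta>\<^sub>1)\<close>: shifting \<open>[hi \<theta>\<^sub>1 - \<theta>\<^sub>1, hi \<theta>\<^sub>2 - \<theta>\<^sub>2]\<close>
  (which lies right of \<open>d\<^sub>0 > 0\<close>) by \<open>\<theta>\<^sub>2\<close> can only lose mass, and the remaining piece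
  \<open>[hi \<theta>\<^sub>1, hi \<theta>\<^sub>1 + \<delta>]\<close> has density at most \<open>g (hi \<theta>\<^sub>1)\<close>.\<close>
lemma hi_mass_spread:
  assumes "d1 < \<theta>\<^sub>1" "\<theta>\<^sub>1 < \<theta>\<^sub>2" "\<theta>\<^sub>2 < 2 * d0" and "hi \<theta>\<^sub>1 - \<theta>\<^sub>1 \<le> hi \<theta>\<^sub>2 - \<theta>\<^sub>2"
  shows "G (hi \<theta>\<^sub>2) - G (hi \<theta>\<^sub>1)
           \<le> (G (hi \<theta>\<^sub>2 - \<theta>\<^sub>2) - G (hi \<theta>\<^sub>1 - \<theta>\<^sub>1)) + (\<theta>\<^sub>2 - \<theta>\<^sub>1) * g (hi \<theta>\<^sub>1)"
proof -
  have t1: "d1 < \<theta>\<^sub>1" "\<theta>\<^sub>1 < 2 * d0" and t2: "d1 < \<theta>\<^sub>2" "\<theta>\<^sub>2 < 2 * d0" using assms by auto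
  define s\<^sub>1 s\<^sub>2 \<delta> where "s\<^sub>1 = hi \<theta>\<^sub>1 - \<theta>\<^sub>1" and "s\<^sub>2 = hi \<theta>\<^sub>2 - \<theta>\<^sub>2" and "\<delta> = \<theta>\<^sub>2 - \<theta>\<^sub>1"
  have "d0 \<le> s\<^sub>1" using hi_minus_\<theta>_ge_d0[OF t1] by (simp add: s\<^sub>1_def)
  have "1 * (G (s\<^sub>2 + \<theta>\<^sub>2) - G (s\<^sub>1 + \<theta>\<^sub>2)) \<le> 1 * (G (s\<^sub>2 + 0) - G (s\<^sub>1 + 0))"
    using assms(4) \<open>d0 \<le> s\<^sub>1\<close> d0_pos \<theta>_pos[OF t2]
    by (intro shifted_increments_le) (auto simp: s\<^sub>1_def s\<^sub>2_def intro!: g_antimono_abs)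
  then have far: "G (hi \<theta>\<^sub>2) - G (hi \<theta>\<^sub>1 + \<delta>) \<le> G s\<^sub>2 - G s\<^sub>1"
    by (simp add: s\<^sub>1_def s\<^sub>2_def \<delta>_def algebra_simps)
  have "G (hi \<theta>\<^sub>1 + \<delta>) - G (hi \<theta>\<^sub>1) \<le> (hi \<theta>\<^sub>1 + \<delta> - hi \<theta>\<^sub>1) * g (hi \<theta>\<^sub>1)"
    using assms(2) \<open>d0 \<le> s\<^sub>1\<close> d0_pos \<theta>_pos[OF t1]
    by (intro G_increment_upper g_antimono_abs) (auto simp: s\<^sub>1_def \<delta>_def)
  then show ?thesis using far by (simp add: s\<^sub>1_def s\<^sub>2_def \<delta>_def)
qed

text \<open>The mass below the upper boundary, \<open>G (hi \<theta> - \<theta>)\<close>, grows by at most \<open>\<alpha> \<delta> g d\<^sub>0\<close>: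
  the defining equation \<open>G (hi \<theta> - \<theta>) = 1/2 + (1 - \<alpha>)/2 G (hi \<theta>)\<close> ties its growth to that of
  \<open>G (hi \<theta>)\<close>, and \<open>g (hi \<theta>\<^sub>1) \<le> g (d\<^sub>0 + \<theta>\<^sub>1)\<close> is controlled by the tail density bound.\<close>
lemma upper_mass_gain:
  assumes "d1 < \<theta>\<^sub>1" "\<theta>\<^sub>1 < \<theta>\<^sub>2" "\<theta>\<^sub>2 < 2 * d0"
  shows "G (hi \<theta>\<^sub>2 - \<theta>\<^sub>2) - G (hi \<theta>\<^sub>1 - \<theta>\<^sub>1) \<le> \<alpha> * ((\<theta>\<^sub>2 - \<theta>\<^sub>1) * g d0)"
proof -
  have t1: "d1 < \<theta>\<^sub>1" "\<theta>\<^sub>1 < 2 * d0" and t2: "d1 < \<theta>\<^sub>2" "\<theta>\<^sub>2 < 2 * d0" using assms by auto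
  define s\<^sub>1 s\<^sub>2 \<delta> where "s\<^sub>1 = hi \<theta>\<^sub>1 - \<theta>\<^sub>1" and "s\<^sub>2 = hi \<theta>\<^sub>2 - \<theta>\<^sub>2" and "\<delta> = \<theta>\<^sub>2 - \<theta>\<^sub>1"
  have "0 < \<delta>" using assms by (simp add: \<delta>_def)
  show ?thesis
  proof (cases "s\<^sub>2 \<le> s\<^sub>1")
    case True
    have "0 \<le> \<alpha> * (\<delta> * g d0)" using \<alpha>_pos \<open>0 < \<delta>\<close> g_nonneg[of d0] by simp
    then show ?thesis using G_mono[OF True] by (simp add: s\<^sub>1_def s\<^sub>2_def \<delta>_def)
  next
    case False
    then have spread: "G (hi \<theta>\<^sub>2) - G (hi \<theta>\<^sub>1) \<le> (G s\<^sub>2 - G s\<^sub>1) + \<delta> * g (hi \<theta>\<^sub>1)"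
      using hi_mass_spread[OF assms] by (simp add: s\<^sub>1_def s\<^sub>2_def \<delta>_def)
    have eq: "G s\<^sub>1 = 1/2 + (1 - \<alpha>) / 2 * G (hi \<theta>\<^sub>1)" "G s\<^sub>2 = 1/2 + (1 - \<alpha>) / 2 * G (hi \<theta>\<^sub>2)"
      using hi_root(1)[OF t1] hi_root(1)[OF t2] unfolding upper_gap_def s\<^sub>1_def s\<^sub>2_def by linarith+
    have "G s\<^sub>2 - G s\<^sub>1 \<le> (1 - \<alpha>) / 2 * ((G s\<^sub>2 - G s\<^sub>1) + \<delta> * g (hi \<theta>\<^sub>1))"
      using eq mult_left_mono[OF spread, of "(1 - \<alpha>) / 2"] \<alpha>_lt_1 by (simp add: right_diff_distrib)
    then have "(1 + \<alpha>) * (G s\<^sub>2 - G s\<^sub>1) \<le> (1 - \<alpha>) * (\<delta> * g (hi \<theta>\<^sub>1))"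
      by (simp add: field_simps)
    also have "\<dots> \<le> \<delta> * ((1 - \<alpha>) * g (d0 + \<theta>\<^sub>1))"
      using hi_minus_\<theta>_ge_d0[OF t1] d0_pos \<theta>_pos[OF t1] \<open>0 < \<delta>\<close> \<alpha>_lt_1
        g_antimono_abs[of "d0 + \<theta>\<^sub>1" "hi \<theta>\<^sub>1"] by (simp add: mult_left_mono)
    also have "\<dots> \<le> \<delta> * (\<alpha> * (1 + \<alpha>) * g d0)"
      using tail_density_bound[OF t1(1)] \<open>0 < \<delta>\<close> by simp
    finally have "(1 + \<alpha>) * (G s\<^sub>2 - G s\<^sub>1) \<le> (1 + \<alpha>) * (\<alpha> * (\<delta> * g d0))"
      by (simp add: algebra_simps)
    then show ?thesis using \<alpha>_pos by (simp add: s\<^sub>1_def s\<^sub>2_def \<delta>_def)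
  qed
qed

lemma coverage_antimono:
  assumes "d1 < \<theta>\<^sub>1" "\<theta>\<^sub>1 \<le> \<theta>\<^sub>2" "\<theta>\<^sub>2 < 2 * d0"
  shows "coverage g \<alpha> \<theta>\<^sub>2 \<le> coverage g \<alpha> \<theta>\<^sub>1"
proof (cases "\<theta>\<^sub>1 = \<theta>\<^sub>2")
  case False
  then have lt: "\<theta>\<^sub>1 < \<theta>\<^sub>2" using assms by simp
  show ?thesis
    using coverage_eq[of \<theta>\<^sub>1] coverage_eq[of \<theta>\<^sub>2] assms
      lower_mass_gain[OF assms(1) lt assms(3)] upper_mass_gain[OF assms(1) lt assms(3)] by auto
qed simp

end

theorem theorem1:
  fixes g :: "real \<Rightarrow> real" and \<alpha> :: real
  assumes "is_density g"
    and "symmetric_unimodal g"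
    and "logconcave g"
    and "0 < \<alpha>" and "\<alpha> < 1"
  shows "\<forall>\<theta>1 \<theta>2. hpd_d1 g \<alpha> < \<theta>1 \<longrightarrow> \<theta>1 \<le> \<theta>2 \<longrightarrow> \<theta>2 < 2 * hpd_d0 g \<alpha> \<longrightarrow>
           coverage g \<alpha> \<theta>2 \<le> coverage g \<alpha> \<theta>1"
proof -
  interpret hpd_setting g \<alpha>
    using assms by unfold_locales auto
  show ?thesis using coverage_antimono by blast
qed

end
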